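(* Let $S=K[x_1,\dots,x_n]$ with $K$ an $F$-finite field of prime characteristic $p$, $I\subseteq S$ a squarefree monomial ideal, and $R=S/I$. If $\mathfrak q$ is a monomial prime ideal of $R$, then $\mathfrak q_e=\mathfrak q^{[p^e]}+\mathcal P(\mathfrak q)$ for every $e\in\mathbb N$.
   Context: A monomial ideal of $R$ is one generated by images of monomials. $\mathfrak q^{[p^e]}$ is the ideal generated by $p^e$-th powers of elements of $\mathfrak q$. $J_e=\{f\in R\mid \varphi(f^{1/p^e})\in J \text{ for all }\varphi\in\operatorname{Hom}_R(R^{1/p^e},R)\}$ and $\mathcal P(J)=\bigcap_{s\in\mathbb N}J_s$ (Cartier core). *)

theory Defs
  imports "HOL-Algebra.QuotRing" "HOL-Computational_Algebra.Primes" "HOL-Library.Poly_Mapping"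
begin

text \<open>Polynomial ring S = K[x_v | v in 'v] (with 'v a finite type of variables),
  elements are finitely supported maps from monomials (exponent vectors) to K.\<close>

type_synonym ('v, 'k) mpoly = "('v \<Rightarrow>\<^sub>0 nat) \<Rightarrow>\<^sub>0 'k"

definition poly_ring :: "('v, 'k::comm_ring_1) mpoly ring" where
  "poly_ring = \<lparr>carrier = UNIV, monoid.mult = (*), one = 1, zero = 0, add = (+)\<rparr>"

definition monom_of :: "('v \<Rightarrow>\<^sub>0 nat) \<Rightarrow> ('v, 'k::comm_ring_1) mpoly" where
  "monom_of m = Poly_Mapping.single m 1"

definition squarefree_monomial_ideal :: "('v, 'k::comm_ring_1) mpoly set \<Rightarrow> bool" where
  "squarefree_monomial_ideal I \<longleftrightarrow>
     (\<exists>G. (\<forall>m\<in>G. \<forall>v. Poly_Mapping.lookup m v \<le> 1) \<and> I = genideal poly_ring (monom_of ` G))"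

definition quot_ring :: "('v, 'k::comm_ring_1) mpoly set \<Rightarrow> ('v, 'k) mpoly set ring" where
  "quot_ring I = poly_ring Quot I"

definition proj :: "('v, 'k::comm_ring_1) mpoly set \<Rightarrow> ('v, 'k) mpoly \<Rightarrow> ('v, 'k) mpoly set" where
  "proj I f = I +>\<^bsub>poly_ring\<^esub> f"

definition monomial_ideal_quot ::
  "('v, 'k::comm_ring_1) mpoly set \<Rightarrow> ('v, 'k) mpoly set set \<Rightarrow> bool" where
  "monomial_ideal_quot I q \<longleftrightarrow>
     (\<exists>G. q = genideal (quot_ring I) ((\<lambda>m. proj I (monom_of m)) ` G))"

definition frob_power :: "('a, 'b) ring_scheme \<Rightarrow> nat \<Rightarrow> 'a set \<Rightarrow> nat \<Rightarrow> 'a set" where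
  "frob_power R p q e = genideal R ((\<lambda>x. x [^]\<^bsub>R\<^esub> (p ^ e)) ` q)"

text \<open>Hom_R(R^{1/p^e}, R), identifying R^{1/p^e} with R viewed as an R-module through
  the e-th Frobenius (f^{1/p^e} corresponds to f): additive maps phi with
  phi(r^{p^e} s) = r phi(s).\<close>
definition cartier_maps :: "('a, 'b) ring_scheme \<Rightarrow> nat \<Rightarrow> nat \<Rightarrow> ('a \<Rightarrow> 'a) set" where
  "cartier_maps R p e = {\<phi>. \<phi> \<in> carrier R \<rightarrow> carrier R \<and>
      (\<forall>x\<in>carrier R. \<forall>y\<in>carrier R. \<phi> (x \<oplus>\<^bsub>R\<^esub> y) = \<phi> x \<oplus>\<^bsub>R\<^esub> \<phi> y) \<and>
      (\<forall>r\<in>carrier R. \<forall>s\<in>carrier R.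
          \<phi> ((r [^]\<^bsub>R\<^esub> (p ^ e)) \<otimes>\<^bsub>R\<^esub> s) = r \<otimes>\<^bsub>R\<^esub> \<phi> s)}"

definition J_e :: "('a, 'b) ring_scheme \<Rightarrow> nat \<Rightarrow> 'a set \<Rightarrow> nat \<Rightarrow> 'a set" where
  "J_e R p J e = {f \<in> carrier R. \<forall>\<phi>\<in>cartier_maps R p e. \<phi> f \<in> J}"

definition cartier_core :: "('a, 'b) ring_scheme \<Rightarrow> nat \<Rightarrow> 'a set \<Rightarrow> 'a set" where
  "cartier_core R p J = (\<Inter>s. J_e R p J s)"

text \<open>F-finite field of characteristic p: K is a finitely generated K^p-module.\<close>
definition F_finite_field :: "'k::field itself \<Rightarrow> nat \<Rightarrow> bool" where
  "F_finite_field _ p \<longleftrightarrow>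
     (\<exists>B::'k set. finite B \<and> (\<forall>x::'k. \<exists>c. x = (\<Sum>b\<in>B. c b ^ p * b)))"

end

theory Submission
  imports Defs
begin

text \<open>
  Only \<open>q\<^sub>e \<subseteq> q\<^sup>[\<^sup>p\<^sup>\<^sup>e\<^sup>] + P(q)\<close> needs the hypotheses. Let \<open>Q\<close> be the preimage of \<open>q\<close>,
  generated by the variables in a set \<open>A\<close>; its complement is a face of the Stanley--Reisner
  complex \<open>\<Delta>\<close> of \<open>I\<close>, and let \<open>G\<close> be the intersection of the facets of \<open>\<Delta>\<close> containing it.
  Take \<open>f \<in> q\<^sub>e\<close> and a term \<open>c x\<^sup>a\<close> of a lift of \<open>f\<close>. If \<open>a\<^sub>v \<ge> p\<^sup>e\<close> for some \<open>v \<in> A\<close>,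
  the term lies in \<open>q\<^sup>[\<^sup>p\<^sup>\<^sup>e\<^sup>]\<close>. If \<open>supp a \<nsubseteq> G\<close>, some facet monomial \<open>x\<^sub>S\<close> with
  \<open>A\<^sup>c \<subseteq> S\<close> has \<open>x\<^sub>S\<^sup>p\<^sup>\<^sup>s x\<^sup>a \<in> I\<close>, hence \<open>x\<^sub>S \<phi>(x\<^sup>a) = 0\<close> for every \<open>\<phi>\<close>, which puts the
  term in \<open>P(q)\<close>. In the remaining case a \<open>p\<^sup>-\<^sup>e\<close>-linear functional on the F-finite field
  \<open>K\<close>, twisted by a suitable monomial \<open>x\<^sup>u\<close>, gives a map \<open>\<phi> \<in> Hom\<^sub>R(R\<^sup>1\<^sup>/\<^sup>p\<^sup>\<^sup>e, R)\<close>
  preserving \<open>I\<close> with \<open>\<phi>(f) \<notin> q\<close>, contradicting \<open>f \<in> q\<^sub>e\<close>.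
\<close>

lemma poly_ring_simps [simp]:
  "carrier poly_ring = UNIV" "monoid.mult poly_ring = (*)" "one poly_ring = 1"
  "zero poly_ring = 0" "add poly_ring = (+)"
  by (simp_all add: poly_ring_def)

lemma cring_poly_ring: "cring (poly_ring :: ('v, 'k::comm_ring_1) mpoly ring)"
proof (rule cringI)
  show "abelian_group (poly_ring :: ('v, 'k) mpoly ring)"
    by (rule abelian_groupI) (auto simp: algebra_simps intro: exI[of _ "- x" for x])
  show "comm_monoid (poly_ring :: ('v, 'k) mpoly ring)"
    by (rule comm_monoidI) (auto simp: algebra_simps)
qed (auto simp: algebra_simps)

interpretation poly: cring "poly_ring :: ('v, 'k::comm_ring_1) mpoly ring"
  by (rule cring_poly_ring)

lemma poly_ring_a_inv [simp]: "a_inv (poly_ring :: ('v, 'k::comm_ring_1) mpoly ring) x = - x"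
  by (metis poly.add.inv_equality poly.add.m_comm UNIV_I add.right_inverse poly_ring_simps)

lemma poly_ring_pow [simp]:
  "x [^]\<^bsub>(poly_ring :: ('v, 'k::comm_ring_1) mpoly ring)\<^esub> (n::nat) = x ^ n"
  by (induct n) (auto simp: mult.commute)

context cring
begin

lemma cartier_map_closed: "\<phi> \<in> cartier_maps R p e \<Longrightarrow> x \<in> carrier R \<Longrightarrow> \<phi> x \<in> carrier R"
  unfolding cartier_maps_def by auto

lemma cartier_map_add:
  "\<phi> \<in> cartier_maps R p e \<Longrightarrow> x \<in> carrier R \<Longrightarrow> y \<in> carrier R \<Longrightarrow> \<phi> (x \<oplus> y) = \<phi> x \<oplus> \<phi> y"
  unfolding cartier_maps_def by auto

lemma cartier_map_frob_linear:
  "\<phi> \<in> cartier_maps R p e \<Longrightarrow> r \<in> carrier R \<Longrightarrow> s \<in> carrier R \<Longrightarrow>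
     \<phi> (r [^] (p ^ e) \<otimes> s) = r \<otimes> \<phi> s"
  unfolding cartier_maps_def by auto

lemma cartier_map_zero: assumes "\<phi> \<in> cartier_maps R p e" shows "\<phi> \<zero> = \<zero>"
proof -
  have "\<phi> \<zero> \<oplus> \<phi> \<zero> = \<phi> \<zero>"
    using cartier_map_add[OF assms, of \<zero> \<zero>] by simp
  thus ?thesis using cartier_map_closed[OF assms] by (simp add: add.l_cancel_one)
qed

lemma cartier_map_uminus:
  assumes "\<phi> \<in> cartier_maps R p e" "x \<in> carrier R" shows "\<phi> (\<ominus> x) = \<ominus> \<phi> x"
proof -
  have "\<phi> (\<ominus> x) \<oplus> \<phi> x = \<zero>"
    using cartier_map_add[OF assms(1), of "\<ominus> x" x] assms cartier_map_zero[OF assms(1)]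
    by (simp add: l_neg)
  thus ?thesis using assms cartier_map_closed[OF assms(1)] minus_equality by simp
qed

lemma cartier_map_premult:
  assumes "\<phi> \<in> cartier_maps R p e" "a \<in> carrier R"
  shows "(\<lambda>s. \<phi> (a \<otimes> s)) \<in> cartier_maps R p e"
  unfolding cartier_maps_def
proof (intro CollectI conjI ballI)
  show "(\<lambda>s. \<phi> (a \<otimes> s)) \<in> carrier R \<rightarrow> carrier R"
    using assms cartier_map_closed by auto
  fix x y assume "x \<in> carrier R" "y \<in> carrier R"
  thus "\<phi> (a \<otimes> (x \<oplus> y)) = \<phi> (a \<otimes> x) \<oplus> \<phi> (a \<otimes> y)"
    using assms by (simp add: r_distr cartier_map_add)
next
  fix r s assume rs: "r \<in> carrier R" "s \<in> carrier R"
  have "a \<otimes> (r [^] (p ^ e) \<otimes> s) = r [^] (p ^ e) \<otimes> (a \<otimes> s)"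
    using rs assms(2) by (intro m_lcomm) auto
  thus "\<phi> (a \<otimes> (r [^] (p ^ e) \<otimes> s)) = r \<otimes> \<phi> (a \<otimes> s)"
    using rs assms by (simp add: cartier_map_frob_linear)
qed

lemma ideal_J_e: assumes "ideal J R" shows "ideal (J_e R p J e) R"
proof -
  interpret J: ideal J R by fact
  show ?thesis
  proof (rule idealI)
    show "subgroup (J_e R p J e) (add_monoid R)"
    proof (rule add.subgroupI)
      show "J_e R p J e \<subseteq> carrier R" "J_e R p J e \<noteq> {}"
        unfolding J_e_def by (auto simp: cartier_map_zero intro!: exI[of _ \<zero>])
    qed (auto simp: J_e_def cartier_map_uminus cartier_map_add)
  next
    fix a x assume a: "a \<in> J_e R p J e" and x: "x \<in> carrier R"
    hence "a \<in> carrier R" unfolding J_e_def by auto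
    moreover have "x \<otimes> a \<in> J_e R p J e"
      using a x cartier_map_premult[of _ p e x] unfolding J_e_def by auto
    ultimately show "x \<otimes> a \<in> J_e R p J e" "a \<otimes> x \<in> J_e R p J e"
      using x by (simp_all add: m_comm)
  qed (rule ring_axioms)
qed

lemma frob_power_subset_J_e:
  assumes "ideal J R" shows "frob_power R p J e \<subseteq> J_e R p J e"
  unfolding frob_power_def
proof (rule genideal_minimal[OF ideal_J_e[OF assms]], safe)
  interpret J: ideal J R by fact
  fix x assume x: "x \<in> J"
  show "x [^] p ^ e \<in> J_e R p J e" unfolding J_e_def
  proof (intro CollectI conjI ballI)
    fix \<phi> assume \<phi>: "\<phi> \<in> cartier_maps R p e"
    have "\<phi> (x [^] p ^ e) = x \<otimes> \<phi> \<one>"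
      using cartier_map_frob_linear[OF \<phi>, of x \<one>] x by simp
    thus "\<phi> (x [^] p ^ e) \<in> J" using x cartier_map_closed[OF \<phi>] J.I_r_closed by simp
  qed (use x in simp)
qed

lemma cartier_core_subset_J_e: "cartier_core R p J \<subseteq> J_e R p J e"
  unfolding cartier_core_def by auto

lemma ideal_cartier_core: assumes "ideal J R" shows "ideal (cartier_core R p J) R"
  unfolding cartier_core_def using i_Intersect[of "range (J_e R p J)"] ideal_J_e[OF assms] by auto

lemma frob_power_plus_cartier_core_subset_J_e:
  assumes "ideal J R"
  shows "frob_power R p J e <+> cartier_core R p J \<subseteq> J_e R p J e"
proof -
  interpret J_e: ideal "J_e R p J e" R using ideal_J_e[OF assms] .
  show ?thesis
    using frob_power_subset_J_e[OF assms] cartier_core_subset_J_e J_e.a_closed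
    by (force simp: set_add_def')
qed

end

definition mk :: "('v::finite \<Rightarrow> nat) \<Rightarrow> ('v \<Rightarrow>\<^sub>0 nat)" where
  "mk f = Abs_poly_mapping f"

lemma lookup_mk [simp]: "Poly_Mapping.lookup (mk f) = f"
  unfolding mk_def by (rule Abs_poly_mapping_inverse) simp

lemma poly_mapping_eq_iff: "a = b \<longleftrightarrow> (\<forall>v. Poly_Mapping.lookup a v = Poly_Mapping.lookup b v)"
  by (metis poly_mapping_eqI)

definition le_pm :: "('v \<Rightarrow>\<^sub>0 nat) \<Rightarrow> ('v \<Rightarrow>\<^sub>0 nat) \<Rightarrow> bool" where
  "le_pm a b \<longleftrightarrow> (\<forall>v. Poly_Mapping.lookup a v \<le> Poly_Mapping.lookup b v)"

lemma le_pm_add_left: "le_pm m b \<Longrightarrow> le_pm m (a + b)"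
  by (auto simp: le_pm_def lookup_add intro: trans_le_add2)

lemma le_pm_add_self: "le_pm a (a + b)"
  by (auto simp: le_pm_def lookup_add)

lemma le_pm_eq_add_diff:
  fixes a b :: "'v::finite \<Rightarrow>\<^sub>0 nat"
  assumes "le_pm a b"
  shows "b = a + mk (\<lambda>v. Poly_Mapping.lookup b v - Poly_Mapping.lookup a v)"
  using assms by (auto simp: le_pm_def poly_mapping_eq_iff lookup_add)

lemma le_pmE:
  fixes a b :: "'v::finite \<Rightarrow>\<^sub>0 nat"
  assumes "le_pm a b" obtains r where "b = a + r"
  using le_pm_eq_add_diff[OF assms] by blast

lemma le_pm_single_iff: "le_pm (Poly_Mapping.single v n) a \<longleftrightarrow> n \<le> Poly_Mapping.lookup a v"
  by (auto simp: le_pm_def lookup_single when_def)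

lemma keys_add_nat:
  "Poly_Mapping.keys (a + b :: 'v \<Rightarrow>\<^sub>0 nat) = Poly_Mapping.keys a \<union> Poly_Mapping.keys b"
  by (auto simp: in_keys_iff lookup_add)

lemma poly_mapping_sum_single:
  fixes F :: "'a \<Rightarrow>\<^sub>0 'b::comm_monoid_add"
  assumes "finite K" "Poly_Mapping.keys F \<subseteq> K"
  shows "F = (\<Sum>a\<in>K. Poly_Mapping.single a (Poly_Mapping.lookup F a))"
proof (rule poly_mapping_eqI)
  fix b
  have "Poly_Mapping.lookup (\<Sum>a\<in>K. Poly_Mapping.single a (Poly_Mapping.lookup F a)) b
      = (\<Sum>a\<in>K. if a = b then Poly_Mapping.lookup F a else 0)"
    by (simp add: lookup_sum lookup_single when_def eq_commute)
  also have "\<dots> = Poly_Mapping.lookup F b"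
    using assms by (auto simp: sum.delta' in_keys_iff)
  finally show "Poly_Mapping.lookup F b
      = Poly_Mapping.lookup (\<Sum>a\<in>K. Poly_Mapping.single a (Poly_Mapping.lookup F a)) b" by simp
qed

lemmas poly_mapping_sum_keys = poly_mapping_sum_single[OF finite_keys order_refl]

lemma single_mult_eq_sum:
  fixes g :: "('v, 'k::comm_ring_1) mpoly"
  shows "Poly_Mapping.single a c * g
    = (\<Sum>k\<in>Poly_Mapping.keys g. Poly_Mapping.single (a + k) (c * Poly_Mapping.lookup g k))"
  by (subst poly_mapping_sum_keys[of g]) (simp add: sum_distrib_left mult_single)

lemma lookup_single_mult_add:
  fixes g :: "('v, 'k::comm_ring_1) mpoly"
  shows "Poly_Mapping.lookup (Poly_Mapping.single a c * g) (a + b) = c * Poly_Mapping.lookup g b"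
proof -
  have "Poly_Mapping.lookup (Poly_Mapping.single a c * g) (a + b)
      = (\<Sum>k\<in>Poly_Mapping.keys g. if k = b then c * Poly_Mapping.lookup g k else 0)"
    unfolding single_mult_eq_sum by (simp add: lookup_sum lookup_single when_def)
  also have "\<dots> = c * Poly_Mapping.lookup g b"
    by (auto simp: sum.delta' in_keys_iff)
  finally show ?thesis .
qed

lemma lookup_single_mult:
  fixes g :: "('v::finite, 'k::comm_ring_1) mpoly"
  shows "Poly_Mapping.lookup (Poly_Mapping.single a c * g) b =
     (if le_pm a b
      then c * Poly_Mapping.lookup g (mk (\<lambda>v. Poly_Mapping.lookup b v - Poly_Mapping.lookup a v))
      else 0)"
proof (cases "le_pm a b")
  case True
  define d where "d = mk (\<lambda>v. Poly_Mapping.lookup b v - Poly_Mapping.lookup a v)"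
  have "Poly_Mapping.lookup (Poly_Mapping.single a c * g) b
      = Poly_Mapping.lookup (Poly_Mapping.single a c * g) (a + d)"
    using le_pm_eq_add_diff[OF True] unfolding d_def by simp
  thus ?thesis using True unfolding d_def lookup_single_mult_add by simp
next
  case False
  hence "\<And>k. a + k \<noteq> b" using le_pm_add_self by blast
  thus ?thesis using False
    unfolding single_mult_eq_sum by (simp add: lookup_sum lookup_single when_def)
qed


definition monomial_ideal :: "('v \<Rightarrow>\<^sub>0 nat) set \<Rightarrow> ('v, 'k::comm_ring_1) mpoly set" where
  "monomial_ideal M = {g. \<forall>b\<in>Poly_Mapping.keys g. \<exists>m\<in>M. le_pm m b}"

lemma ideal_monomial_ideal: "ideal (monomial_ideal M :: ('v, 'k::comm_ring_1) mpoly set) poly_ring"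
proof (rule idealI)
  show "subgroup (monomial_ideal M :: ('v, 'k) mpoly set) (add_monoid poly_ring)"
  proof (rule poly.add.subgroupI)
    fix a b :: "('v, 'k) mpoly" assume "a \<in> monomial_ideal M" "b \<in> monomial_ideal M"
    thus "a \<oplus>\<^bsub>poly_ring\<^esub> b \<in> monomial_ideal M"
      using keys_add[of a b] by (auto simp: monomial_ideal_def)
  qed (auto simp: monomial_ideal_def intro!: exI[of _ 0])
next
  fix a x :: "('v, 'k) mpoly" assume "a \<in> monomial_ideal M"
  hence "x * a \<in> monomial_ideal M"
    using keys_mult[of x a] by (auto simp: monomial_ideal_def dest!: subsetD intro: le_pm_add_left)
  thus "x \<otimes>\<^bsub>poly_ring\<^esub> a \<in> monomial_ideal M" "a \<otimes>\<^bsub>poly_ring\<^esub> x \<in> monomial_ideal M"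
    by (simp_all add: mult.commute)
qed (rule poly.ring_axioms)

lemma mem_ideal_if_terms_mem:
  fixes g :: "('v, 'k::comm_ring_1) mpoly"
  assumes "ideal J poly_ring"
    and "\<And>b. b \<in> Poly_Mapping.keys g \<Longrightarrow> Poly_Mapping.single b (Poly_Mapping.lookup g b) \<in> J"
  shows "g \<in> J"
proof -
  interpret J: ideal J poly_ring by fact
  have "(\<Sum>b\<in>K. Poly_Mapping.single b (Poly_Mapping.lookup g b)) \<in> J"
    if "finite K" "K \<subseteq> Poly_Mapping.keys g" for K
    using that by (induct rule: finite_induct)
      (auto intro: assms(2) J.a_closed[simplified] J.zero_closed[simplified])
  thus ?thesis by (metis poly_mapping_sum_keys finite_keys order_refl)
qed

lemma single_eq_mult_monom_of: "Poly_Mapping.single (a + b) c = Poly_Mapping.single a c * monom_of b"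
  by (simp add: monom_of_def mult_single)

lemma genideal_monom_of_eq_monomial_ideal:
  "genideal poly_ring (monom_of ` M :: ('v::finite, 'k::comm_ring_1) mpoly set) = monomial_ideal M"
proof
  show "genideal poly_ring (monom_of ` M) \<subseteq> (monomial_ideal M :: ('v, 'k) mpoly set)"
    by (rule poly.genideal_minimal[OF ideal_monomial_ideal])
       (auto simp: monomial_ideal_def monom_of_def le_pm_def)
next
  interpret J: ideal "genideal poly_ring (monom_of ` M :: ('v, 'k) mpoly set)" poly_ring
    by (rule poly.genideal_ideal) simp
  show "monomial_ideal M \<subseteq> genideal poly_ring (monom_of ` M :: ('v, 'k) mpoly set)"
  proof
    fix g :: "('v, 'k) mpoly" assume g: "g \<in> monomial_ideal M"
    show "g \<in> genideal poly_ring (monom_of ` M :: ('v, 'k) mpoly set)"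
    proof (rule mem_ideal_if_terms_mem[OF J.ideal_axioms])
      fix b assume "b \<in> Poly_Mapping.keys g"
      then obtain m where m: "m \<in> M" "le_pm m b" using g by (auto simp: monomial_ideal_def)
      obtain r where "b = m + r" using m(2) by (rule le_pmE)
      moreover have "monom_of m \<in> genideal poly_ring (monom_of ` M :: ('v, 'k) mpoly set)"
        using m(1) poly.genideal_self[of "monom_of ` M"] by auto
      ultimately show "Poly_Mapping.single b (Poly_Mapping.lookup g b) \<in> genideal poly_ring (monom_of ` M)"
        using J.I_l_closed by (simp add: single_eq_mult_monom_of add.commute[of m])
    qed
  qed
qed

lemma ideal_squarefree_monomial_ideal:
  "squarefree_monomial_ideal (I :: ('v::finite, 'k::comm_ring_1) mpoly set) \<Longrightarrow> ideal I poly_ring"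
  unfolding squarefree_monomial_ideal_def
  using genideal_monom_of_eq_monomial_ideal ideal_monomial_ideal by metis

lemma CHAR_poly_mapping: "CHAR('a::monoid_add \<Rightarrow>\<^sub>0 'b::comm_semiring_1) = CHAR('b)"
proof -
  have "(of_nat n :: 'a \<Rightarrow>\<^sub>0 'b) = 0 \<longleftrightarrow> (of_nat n :: 'b) = 0" for n
  proof
    assume "(of_nat n :: 'a \<Rightarrow>\<^sub>0 'b) = 0"
    hence "Poly_Mapping.lookup (of_nat n :: 'a \<Rightarrow>\<^sub>0 'b) 0 = 0" by simp
    thus "(of_nat n :: 'b) = 0" by (simp add: lookup_of_nat)
  next
    assume "(of_nat n :: 'b) = 0"
    thus "(of_nat n :: 'a \<Rightarrow>\<^sub>0 'b) = 0" by (intro poly_mapping_eqI) (simp add: lookup_of_nat)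
  qed
  thus ?thesis by (intro CHAR_eqI) (simp_all add: of_nat_eq_0_iff_char_dvd)
qed

definition smul_pm :: "nat \<Rightarrow> ('v::finite \<Rightarrow>\<^sub>0 nat) \<Rightarrow> ('v \<Rightarrow>\<^sub>0 nat)" where
  "smul_pm n a = mk (\<lambda>v. n * Poly_Mapping.lookup a v)"

lemma single_power:
  "Poly_Mapping.single (a::'v::finite \<Rightarrow>\<^sub>0 nat) (c::'k::comm_semiring_1) ^ n
     = Poly_Mapping.single (smul_pm n a) (c ^ n)"
proof (induct n)
  case (Suc n)
  have "a + smul_pm n a = smul_pm (Suc n) a"
    by (simp add: poly_mapping_eq_iff lookup_add smul_pm_def)
  thus ?case using Suc by (simp add: mult_single)
next
  case 0
  have "smul_pm 0 a = 0" by (simp add: smul_pm_def poly_mapping_eq_iff)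
  thus ?case by simp
qed

lemma monom_of_add: "monom_of (a + b) = (monom_of a * monom_of b :: ('v, 'k::comm_ring_1) mpoly)"
  by (simp add: monom_of_def mult_single)

lemma monom_of_sum:
  "monom_of (\<Sum>k\<in>K. f k) = (\<Prod>k\<in>K. monom_of (f k) :: ('v, 'k::comm_ring_1) mpoly)"
  by (induct K rule: infinite_finite_induct) (simp_all add: monom_of_add, simp_all add: monom_of_def)

abbreviation var :: "'v \<Rightarrow> ('v, 'k::comm_ring_1) mpoly" where
  "var v \<equiv> monom_of (Poly_Mapping.single v 1)"

lemma var_power: "var v ^ n = (monom_of (Poly_Mapping.single v n) :: ('v::finite, 'k::comm_ring_1) mpoly)"
proof -
  have "smul_pm n (Poly_Mapping.single v 1) = Poly_Mapping.single v n"
    by (simp add: smul_pm_def poly_mapping_eq_iff lookup_single when_def)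
  thus ?thesis unfolding monom_of_def single_power by simp
qed

lemma monom_of_eq_prod_var_power:
  "monom_of a = (\<Prod>v\<in>UNIV. var v ^ Poly_Mapping.lookup a v :: ('v::finite, 'k::comm_ring_1) mpoly)"
proof -
  have "a = (\<Sum>v\<in>UNIV. Poly_Mapping.single v (Poly_Mapping.lookup a v))"
    by (rule poly_mapping_sum_single) auto
  hence "monom_of a = (monom_of (\<Sum>v\<in>UNIV. Poly_Mapping.single v (Poly_Mapping.lookup a v))
      :: ('v, 'k) mpoly)" by simp
  thus ?thesis by (simp only: monom_of_sum var_power)
qed

locale F_finite =
  fixes p :: nat and field_type :: "'k::field itself"
  assumes prime_p: "prime p" and CHAR_eq: "CHAR('k) = p"
    and finitely_generated: "F_finite_field TYPE('k) p"
begin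

lemma p_pos: "p > 0"
  using prime_p prime_gt_0_nat by blast

lemma frobenius_add: "((x::'k) + y) ^ p = x ^ p + y ^ p"
  by (rule freshmans_dream) (use prime_p CHAR_eq in auto)

lemma frobenius_uminus: "(- x :: 'k) ^ p = - (x ^ p)"
  using minus_power_prime_CHAR[of p x] prime_p CHAR_eq by simp

lemma frobenius_diff: "((x::'k) - y) ^ p = x ^ p - y ^ p"
  using frobenius_add[of x "- y"] frobenius_uminus[of y] by simp

definition spans :: "'k set \<Rightarrow> bool" where
  "spans C \<longleftrightarrow> (\<forall>x. \<exists>c. x = (\<Sum>b\<in>C. c b ^ p * b))"

lemma spans_insert: "spans C \<Longrightarrow> finite C \<Longrightarrow> spans (insert a C)"
  unfolding spans_def
proof (intro allI)
  fix x assume "\<forall>x. \<exists>c. x = (\<Sum>b\<in>C. c b ^ p * b)" "finite C"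
  then obtain c where c: "x = (\<Sum>b\<in>C. c b ^ p * b)" by blast
  show "\<exists>c. x = (\<Sum>b\<in>insert a C. c b ^ p * b)"
  proof (cases "a \<in> C")
    case False
    have "(\<Sum>b\<in>C. (c(a := 0)) b ^ p * b) = (\<Sum>b\<in>C. c b ^ p * b)"
      using False by (intro sum.cong) auto
    hence "(\<Sum>b\<in>insert a C. (c(a := 0)) b ^ p * b) = x"
      using \<open>finite C\<close> False p_pos c by (simp add: zero_power)
    thus ?thesis by metis
  qed (use c in \<open>auto simp: insert_absorb\<close>)
qed

lemma ex_finite_spans: "\<exists>C. finite C \<and> 1 \<in> C \<and> spans C"
  using finitely_generated spans_insert[of _ 1] unfolding F_finite_field_def spans_def[symmetric]
  by blast

lemma spans_remove:
  assumes "spans C" "finite C" "b1 \<in> C"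
    and relation: "(\<Sum>b\<in>C. c b ^ p * b) = 0" and "c b1 \<noteq> 0"
  shows "spans (C - {b1})"
  unfolding spans_def
proof
  let ?C' = "C - {b1}"
  have split: "(\<Sum>b\<in>C. f b) = f b1 + (\<Sum>b\<in>?C'. f b)" for f :: "'k \<Rightarrow> 'k"
    using assms(2,3) by (simp add: sum.remove)
  have nz: "c b1 ^ p \<noteq> 0" using assms(5) by simp
  have "c b1 ^ p * b1 = - (\<Sum>b\<in>?C'. c b ^ p * b)"
    using relation split[of "\<lambda>b. c b ^ p * b"] by (simp add: eq_neg_iff_add_eq_0)
  hence "b1 = - (\<Sum>b\<in>?C'. c b ^ p * b) / c b1 ^ p" using nz by (simp add: field_simps)
  also have "\<dots> = (\<Sum>b\<in>?C'. (- c b / c b1) ^ p * b)"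
    by (simp add: sum_divide_distrib sum_negf power_divide frobenius_uminus field_simps)
  finally have b1: "b1 = (\<Sum>b\<in>?C'. (- c b / c b1) ^ p * b)" .
  fix x
  obtain d where d: "x = (\<Sum>b\<in>C. d b ^ p * b)" using assms(1) unfolding spans_def by blast
  have "x = d b1 ^ p * b1 + (\<Sum>b\<in>?C'. d b ^ p * b)" using d split by simp
  also have "\<dots> = (\<Sum>b\<in>?C'. (d b1 * (- c b / c b1)) ^ p * b) + (\<Sum>b\<in>?C'. d b ^ p * b)"
    by (subst b1) (simp only: sum_distrib_left power_mult_distrib mult.assoc)
  also have "\<dots> = (\<Sum>b\<in>?C'. (d b1 * (- c b / c b1) + d b) ^ p * b)"
    by (simp only: frobenius_add sum.distrib distrib_right)
  finally show "\<exists>c. x = (\<Sum>b\<in>?C'. c b ^ p * b)"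
    by (rule exI[of _ "\<lambda>b. d b1 * (- c b / c b1) + d b"])
qed

text \<open>A \<open>K\<^sup>p\<close>-spanning set containing \<open>1\<close> of least cardinality; minimality makes it
  \<open>K\<^sup>p\<close>-linearly independent, and the coordinate at \<open>1\<close> is then \<open>p\<^sup>-\<^sup>1\<close>-linear.\<close>
definition basis :: "'k set" where
  "basis = (SOME C. finite C \<and> 1 \<in> C \<and> spans C \<and>
     (\<forall>C'. finite C' \<and> 1 \<in> C' \<and> spans C' \<longrightarrow> card C \<le> card C'))"

lemma basis: "finite basis" "1 \<in> basis" "spans basis"
  and basis_card_minimal: "finite C \<Longrightarrow> 1 \<in> C \<Longrightarrow> spans C \<Longrightarrow> card basis \<le> card C"
proof -
  have "\<exists>C. finite C \<and> 1 \<in> C \<and> spans C \<and>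
          (\<forall>C'. finite C' \<and> 1 \<in> C' \<and> spans C' \<longrightarrow> card C \<le> card C')"
    using ex_has_least_nat[of "\<lambda>C. finite C \<and> 1 \<in> C \<and> spans C"] ex_finite_spans by blast
  from someI_ex[OF this] show "finite basis" "1 \<in> basis" "spans basis"
    "finite C \<Longrightarrow> 1 \<in> C \<Longrightarrow> spans C \<Longrightarrow> card basis \<le> card C"
    unfolding basis_def by blast+
qed

lemma basis_independent:
  assumes "(\<Sum>b\<in>basis. c b ^ p * b) = 0" "b0 \<in> basis"
  shows "c b0 = 0"
proof (rule ccontr)
  assume "c b0 \<noteq> 0"
  show False
  proof (cases "\<exists>b1\<in>basis. b1 \<noteq> 1 \<and> c b1 \<noteq> 0")
    case True
    then obtain b1 where b1: "b1 \<in> basis" "b1 \<noteq> 1" "c b1 \<noteq> 0" by blast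
    hence "spans (basis - {b1})" using spans_remove basis assms(1) by blast
    hence "card basis \<le> card (basis - {b1})"
      using basis b1 by (intro basis_card_minimal) auto
    thus False using basis(1) b1(1) card_Diff1_less by fastforce
  next
    case False
    hence "(\<Sum>b\<in>basis. c b ^ p * b) = c 1 ^ p"
      using basis(1,2) p_pos by (subst sum.remove[of _ 1]) (auto intro!: sum.neutral)
    hence "c 1 = 0" using assms(1) p_pos by simp
    thus False using False \<open>c b0 \<noteq> 0\<close> assms(2) by (cases "b0 = 1") auto
  qed
qed

definition coord :: "'k \<Rightarrow> 'k \<Rightarrow> 'k" where
  "coord x = (SOME c. x = (\<Sum>b\<in>basis. c b ^ p * b))"

lemma coord: "x = (\<Sum>b\<in>basis. coord x b ^ p * b)"
proof -
  have "\<exists>c. x = (\<Sum>b\<in>basis. c b ^ p * b)" using basis(3) unfolding spans_def by blast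
  thus ?thesis unfolding coord_def by (rule someI_ex)
qed

lemma coord_unique:
  assumes "x = (\<Sum>b\<in>basis. c b ^ p * b)" "b0 \<in> basis"
  shows "coord x b0 = c b0"
proof -
  have "(\<Sum>b\<in>basis. (coord x b - c b) ^ p * b) = 0"
    using coord[of x] assms(1) by (simp add: frobenius_diff left_diff_distrib sum_subtractf)
  thus ?thesis using basis_independent[of "\<lambda>b. coord x b - c b" b0] assms(2) by simp
qed

definition coord1 :: "'k \<Rightarrow> 'k" where "coord1 x = coord x 1"

lemma coord1_add: "coord1 (x + y) = coord1 x + coord1 y"
proof -
  have "x + y = (\<Sum>b\<in>basis. (coord x b + coord y b) ^ p * b)"
    using coord[of x] coord[of y] by (simp add: frobenius_add distrib_right sum.distrib)
  from coord_unique[OF this basis(2)] show ?thesis unfolding coord1_def by simp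
qed

lemma coord1_frob_linear: "coord1 (l ^ p * x) = l * coord1 x"
proof -
  have "l ^ p * x = (\<Sum>b\<in>basis. (l * coord x b) ^ p * b)"
    by (subst coord[of x]) (simp add: power_mult_distrib sum_distrib_left mult.assoc)
  from coord_unique[OF this basis(2)] show ?thesis unfolding coord1_def by simp
qed

lemma coord1_one: "coord1 1 = 1"
proof -
  have "(\<Sum>b\<in>basis. (if b = 1 then 1 else 0) ^ p * b) = (\<Sum>b\<in>basis. if b = 1 then 1 else (0::'k))"
    using p_pos by (intro sum.cong) auto
  hence "1 = (\<Sum>b\<in>basis. (if b = 1 then 1 else 0) ^ p * (b::'k))"
    using basis(1,2) by simp
  from coord_unique[OF this basis(2)] show ?thesis unfolding coord1_def by simp
qed

lemma coord1_iterate_frob_linear: "(coord1 ^^ e) (l ^ (p ^ e) * x) = l * (coord1 ^^ e) x"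
proof (induct e arbitrary: l x)
  case (Suc e)
  have "(coord1 ^^ Suc e) (l ^ (p ^ Suc e) * x) = (coord1 ^^ e) (coord1 ((l ^ (p ^ e)) ^ p * x))"
    by (simp add: funpow_Suc_right power_mult[symmetric] mult.commute del: funpow.simps)
  also have "\<dots> = l * (coord1 ^^ Suc e) x"
    by (simp add: coord1_frob_linear Suc funpow_Suc_right del: funpow.simps)
  finally show ?case .
qed simp

lemma coord1_iterate_add: "(coord1 ^^ e) (x + y) = (coord1 ^^ e) x + (coord1 ^^ e) y"
  by (induct e arbitrary: x y) (auto simp: coord1_add)

lemma coord1_iterate_one: "(coord1 ^^ e) 1 = 1"
  by (induct e) (auto simp: coord1_one)

text \<open>Dividing by \<open>c\<^sub>0\<close> before applying the iterated coordinate map makes it nonzero at \<open>c\<^sub>0\<close>.\<close>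
lemma ex_frob_inverse_linear_nonzero_at:
  assumes "c0 \<noteq> 0"
  shows "\<exists>\<psi>::'k \<Rightarrow> 'k. (\<forall>x y. \<psi> (x + y) = \<psi> x + \<psi> y) \<and>
           (\<forall>l x. \<psi> (l ^ (p ^ e) * x) = l * \<psi> x) \<and> \<psi> c0 \<noteq> 0"
proof (intro exI[of _ "\<lambda>x. (coord1 ^^ e) (x / c0)"] conjI allI)
  show "(coord1 ^^ e) ((x + y) / c0) = (coord1 ^^ e) (x / c0) + (coord1 ^^ e) (y / c0)" for x y
    by (simp add: add_divide_distrib coord1_iterate_add)
  show "(coord1 ^^ e) (l ^ p ^ e * x / c0) = l * (coord1 ^^ e) (x / c0)" for l x
    using coord1_iterate_frob_linear by (metis times_divide_eq_right)
  show "(coord1 ^^ e) (c0 / c0) \<noteq> 0" using assms coord1_iterate_one by simp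
qed

end

lemma shifted_exponent_le_iff:
  fixes q U D B :: nat
  assumes "q > 0"
  shows "(U \<le> q * D + (q - 1) \<and> q * B \<le> q * D + (q - 1) - U) \<longleftrightarrow>
         (B \<le> D \<and> U \<le> q * (D - B) + (q - 1))"
proof (cases "B \<le> D")
  case True
  hence "q * (D - B) = q * D - q * B" "q * B \<le> q * D" by (simp_all add: diff_mult_distrib2)
  thus ?thesis using True by linarith
next
  case False
  hence "q * B \<ge> q * D + q" using mult_le_mono2[of "D + 1" B q] by simp
  thus ?thesis using False assms by linarith
qed

lemma shifted_exponent_diff:
  fixes q U D B :: nat
  assumes "B \<le> D" "U \<le> q * (D - B) + (q - 1)"
  shows "q * D + (q - 1) - U - q * B = q * (D - B) + (q - 1) - U"
proof -
  have "q * (D - B) = q * D - q * B" "q * B \<le> q * D"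
    using assms(1) by (simp_all add: diff_mult_distrib2)
  thus ?thesis using assms(2) by linarith
qed

text \<open>
  \<open>Phi g\<close> is \<open>T (x\<^sup>u g)\<close>, where \<open>T\<close> is the standard generator of
  \<open>Hom(S\<^sup>1\<^sup>/\<^sup>p\<^sup>\<^sup>e, S)\<close> twisted by \<open>\<psi>\<close> on coefficients: it sends \<open>c x\<^sup>b\<close> to
  \<open>\<psi>(c) x\<^sup>d\<close> if \<open>b = p\<^sup>e d + (p\<^sup>e - 1)\<close> componentwise and to \<open>0\<close> otherwise.
  The exponent of \<open>g\<close> contributing to \<open>x\<^sup>d\<close> is \<open>source d\<close>.
\<close>
locale twisted_trace =
  fixes p e :: nat and u :: "'v::finite \<Rightarrow>\<^sub>0 nat" and \<psi> :: "'k::field \<Rightarrow> 'k"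
  assumes prime_p: "prime p" and CHAR_eq: "CHAR('k) = p"
    and \<psi>_add: "\<And>x y. \<psi> (x + y) = \<psi> x + \<psi> y"
    and \<psi>_frob_linear: "\<And>l x. \<psi> (l ^ (p ^ e) * x) = l * \<psi> x"
begin

lemma p_power_pos: "p ^ e > 0"
  using prime_p prime_gt_0_nat by simp

lemma \<psi>_zero: "\<psi> 0 = 0"
  using \<psi>_add[of 0 0] by (metis add_cancel_right_right)

definition admissible :: "('v \<Rightarrow>\<^sub>0 nat) \<Rightarrow> bool" where
  "admissible d \<longleftrightarrow>
     (\<forall>v. Poly_Mapping.lookup u v \<le> p ^ e * Poly_Mapping.lookup d v + (p ^ e - 1))"

definition source :: "('v \<Rightarrow>\<^sub>0 nat) \<Rightarrow> ('v \<Rightarrow>\<^sub>0 nat)" where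
  "source d = mk (\<lambda>v. p ^ e * Poly_Mapping.lookup d v + (p ^ e - 1) - Poly_Mapping.lookup u v)"

lemma inj_on_source: "inj_on source {d. admissible d}"
proof (rule inj_onI)
  fix d d' assume "d \<in> {d. admissible d}" "d' \<in> {d. admissible d}" "source d = source d'"
  have "p ^ e * Poly_Mapping.lookup d v = p ^ e * Poly_Mapping.lookup d' v" for v
  proof -
    have "Poly_Mapping.lookup (source d) v = Poly_Mapping.lookup (source d') v"
      using \<open>source d = source d'\<close> by simp
    moreover have "Poly_Mapping.lookup u v \<le> p ^ e * Poly_Mapping.lookup d v + (p ^ e - 1)"
      "Poly_Mapping.lookup u v \<le> p ^ e * Poly_Mapping.lookup d' v + (p ^ e - 1)"
      using \<open>d \<in> {d. admissible d}\<close> \<open>d' \<in> {d. admissible d}\<close> by (auto simp: admissible_def)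
    ultimately show ?thesis unfolding source_def lookup_mk by linarith
  qed
  thus "d = d'" using p_power_pos by (simp add: poly_mapping_eq_iff del: power_eq_0_iff)
qed

definition Phi :: "('v, 'k) mpoly \<Rightarrow> ('v, 'k) mpoly" where
  "Phi g = Abs_poly_mapping (\<lambda>d. if admissible d then \<psi> (Poly_Mapping.lookup g (source d)) else 0)"

lemma lookup_Phi:
  "Poly_Mapping.lookup (Phi g) d = (if admissible d then \<psi> (Poly_Mapping.lookup g (source d)) else 0)"
proof -
  have "{d. (if admissible d then \<psi> (Poly_Mapping.lookup g (source d)) else 0) \<noteq> 0}
      \<subseteq> source -` Poly_Mapping.keys g \<inter> {d. admissible d}"
    using \<psi>_zero by (auto simp: in_keys_iff split: if_splits)
  moreover have "finite (source -` Poly_Mapping.keys g \<inter> {d. admissible d})"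
    by (rule finite_vimage_IntI[OF finite_keys inj_on_source])
  ultimately have "finite {d. (if admissible d then \<psi> (Poly_Mapping.lookup g (source d)) else 0) \<noteq> 0}"
    by (rule finite_subset)
  thus ?thesis unfolding Phi_def by simp
qed

lemma Phi_add: "Phi (g + h) = Phi g + Phi h"
  by (simp add: poly_mapping_eq_iff lookup_Phi lookup_add \<psi>_add \<psi>_zero)

lemma Phi_zero: "Phi 0 = 0"
  by (simp add: poly_mapping_eq_iff lookup_Phi \<psi>_zero)

lemma Phi_sum: "Phi (\<Sum>k\<in>K. f k) = (\<Sum>k\<in>K. Phi (f k))"
  by (induct K rule: infinite_finite_induct) (simp_all add: Phi_zero Phi_add)

lemma Phi_single_power_mult:
  "Phi (Poly_Mapping.single (smul_pm (p ^ e) b) (c ^ (p ^ e)) * g) = Poly_Mapping.single b c * Phi g"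
proof (rule poly_mapping_eqI)
  fix d
  let ?d_b = "mk (\<lambda>v. Poly_Mapping.lookup d v - Poly_Mapping.lookup b v)"
  have admissible_iff: "(admissible d \<and> le_pm (smul_pm (p ^ e) b) (source d)) \<longleftrightarrow>
      (le_pm b d \<and> admissible ?d_b)"
    unfolding admissible_def le_pm_def source_def smul_pm_def lookup_mk
    by (simp only: all_conj_distrib[symmetric] shifted_exponent_le_iff[OF p_power_pos])
  have source_eq: "mk (\<lambda>v. Poly_Mapping.lookup (source d) v - Poly_Mapping.lookup (smul_pm (p ^ e) b) v)
      = source ?d_b" if "le_pm b d" "admissible ?d_b"
    using that unfolding admissible_def le_pm_def source_def smul_pm_def lookup_mk
    by (intro arg_cong[where f=mk] ext shifted_exponent_diff) auto
  show "Poly_Mapping.lookup (Phi (Poly_Mapping.single (smul_pm (p ^ e) b) (c ^ p ^ e) * g)) d =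
        Poly_Mapping.lookup (Poly_Mapping.single b c * Phi g) d"
  proof (cases "le_pm b d \<and> admissible ?d_b")
    case True
    hence "admissible d" "le_pm (smul_pm (p ^ e) b) (source d)" using admissible_iff by blast+
    thus ?thesis using True source_eq unfolding lookup_Phi lookup_single_mult
      by (simp add: \<psi>_frob_linear)
  next
    case False
    thus ?thesis using admissible_iff \<psi>_zero unfolding lookup_Phi lookup_single_mult by auto
  qed
qed

lemma Phi_frob_linear: "Phi (r ^ (p ^ e) * g) = r * Phi g"
proof -
  have "r ^ (p ^ e) = (\<Sum>a\<in>Poly_Mapping.keys r. Poly_Mapping.single a (Poly_Mapping.lookup r a)) ^ (p ^ e)"
    by (subst poly_mapping_sum_keys[of r]) simp
  also have "\<dots> = (\<Sum>a\<in>Poly_Mapping.keys r. Poly_Mapping.single a (Poly_Mapping.lookup r a) ^ (p ^ e))"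
    using prime_p CHAR_eq by (intro freshmans_dream_sum') (simp_all add: CHAR_poly_mapping)
  finally have "Phi (r ^ (p ^ e) * g) = (\<Sum>a\<in>Poly_Mapping.keys r.
      Phi (Poly_Mapping.single (smul_pm (p ^ e) a) (Poly_Mapping.lookup r a ^ (p ^ e)) * g))"
    by (simp add: single_power sum_distrib_right Phi_sum)
  also have "\<dots> = r * Phi g"
    by (subst (3) poly_mapping_sum_keys[of r]) (simp add: Phi_single_power_mult sum_distrib_right)
  finally show ?thesis .
qed

lemma admissible_source_eq:
  assumes u: "u = mk (\<lambda>v. p ^ e * Poly_Mapping.lookup d v + (p ^ e - 1) - Poly_Mapping.lookup a v)"
    and a: "\<And>v. Poly_Mapping.lookup a v \<le> p ^ e * Poly_Mapping.lookup d v + (p ^ e - 1)"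
  shows "admissible d" "source d = a"
proof -
  show "admissible d" unfolding admissible_def unfolding u lookup_mk by simp
  have "p ^ e * Poly_Mapping.lookup d v + (p ^ e - 1) - Poly_Mapping.lookup u v = Poly_Mapping.lookup a v"
    for v using a[of v] unfolding u lookup_mk by linarith
  thus "source d = a" unfolding source_def by (simp add: poly_mapping_eq_iff)
qed

lemma lookup_pos_if_admissible:
  assumes "admissible d" "p ^ e \<le> Poly_Mapping.lookup u v"
  shows "0 < Poly_Mapping.lookup d v"
proof (rule ccontr)
  assume "\<not> 0 < Poly_Mapping.lookup d v"
  moreover have "Poly_Mapping.lookup u v \<le> p ^ e * Poly_Mapping.lookup d v + (p ^ e - 1)"
    using assms(1) unfolding admissible_def by blast
  ultimately have "Poly_Mapping.lookup u v \<le> p ^ e - 1" by simp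
  thus False using assms(2) p_power_pos by linarith
qed

lemma lookup_pos_if_source_pos:
  assumes "p ^ e - 1 \<le> Poly_Mapping.lookup u v" "0 < Poly_Mapping.lookup (source d) v"
  shows "0 < Poly_Mapping.lookup d v"
proof (rule ccontr)
  assume "\<not> 0 < Poly_Mapping.lookup d v"
  thus False using assms unfolding source_def lookup_mk by simp
qed

end

locale poly_quotient =
  fixes I :: "('v::finite, 'k::comm_ring_1) mpoly set"
  assumes ideal_I: "ideal I poly_ring"
begin

interpretation I: ideal I poly_ring by (rule ideal_I)

abbreviation R :: "('v, 'k) mpoly set ring" where "R \<equiv> quot_ring I"

lemma cring_R: "cring R"
  unfolding quot_ring_def by (rule I.quotient_is_cring[OF cring_poly_ring])

sublocale R: cring R by (rule cring_R)

lemma proj_ring_hom: "proj I \<in> ring_hom poly_ring R"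
  unfolding quot_ring_def proj_def[abs_def] using I.rcos_ring_hom by simp

lemma proj_add: "proj I (x + y) = proj I x \<oplus>\<^bsub>R\<^esub> proj I y"
  using ring_hom_add[OF proj_ring_hom, of x y] by simp

lemma proj_mult: "proj I (x * y) = proj I x \<otimes>\<^bsub>R\<^esub> proj I y"
  using ring_hom_mult[OF proj_ring_hom, of x y] by simp

lemma proj_zero: "proj I 0 = \<zero>\<^bsub>R\<^esub>"
  using ring_hom_zero[OF proj_ring_hom poly.ring_axioms R.ring_axioms] by simp

lemma proj_closed [simp]: "proj I g \<in> carrier R"
  using ring_hom_closed[OF proj_ring_hom, of g] by simp

lemma proj_power: "proj I (x ^ n) = proj I x [^]\<^bsub>R\<^esub> n"
proof -
  interpret ring_hom_ring poly_ring R "proj I"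
    by (intro ring_hom_ringI2 poly.ring_axioms R.ring_axioms proj_ring_hom)
  show ?thesis using hom_nat_pow[of x n] by simp
qed

lemma carrier_R: "carrier R = range (proj I)"
  by (auto simp: quot_ring_def FactRing_def A_RCOSETS_def' proj_def)

lemma proj_eq_zero_iff: "proj I g = \<zero>\<^bsub>R\<^esub> \<longleftrightarrow> g \<in> I"
  using I.rcos_const_imp_mem poly.a_rcos_zero[OF ideal_I]
  by (auto simp: quot_ring_def FactRing_def proj_def)

lemma proj_eq_iff: "proj I g = proj I h \<longleftrightarrow> g - h \<in> I"
  using poly.quotient_eq_iff_same_a_r_cos[OF ideal_I, of g h] by (simp add: proj_def poly.minus_eq)

lemma cartier_map_of_ideal_preserving:
  fixes \<Phi> :: "('v, 'k) mpoly \<Rightarrow> ('v, 'k) mpoly"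
  assumes add: "\<And>g h. \<Phi> (g + h) = \<Phi> g + \<Phi> h"
    and frob_linear: "\<And>r g. \<Phi> (r ^ (p ^ e) * g) = r * \<Phi> g"
    and preserves_I: "\<And>g. g \<in> I \<Longrightarrow> \<Phi> g \<in> I"
  obtains \<phi> where "\<phi> \<in> cartier_maps R p e" "\<And>g. \<phi> (proj I g) = proj I (\<Phi> g)"
proof -
  define \<phi> where "\<phi> X = proj I (\<Phi> (SOME g. X = proj I g))" for X
  have diff: "\<Phi> (g - h) = \<Phi> g - \<Phi> h" for g h
    using add[of "g - h" h] by (simp add: algebra_simps)
  have \<phi>_proj: "\<phi> (proj I g) = proj I (\<Phi> g)" for g
  proof -
    have "proj I g = proj I (SOME g'. proj I g = proj I g')" by (rule someI_ex) blast
    hence "\<Phi> (SOME g'. proj I g = proj I g') - \<Phi> g \<in> I"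
      using preserves_I diff proj_eq_iff by metis
    thus ?thesis unfolding \<phi>_def using proj_eq_iff by blast
  qed
  have "\<phi> \<in> cartier_maps R p e" unfolding cartier_maps_def
  proof (intro CollectI conjI ballI)
    show "\<phi> \<in> carrier R \<rightarrow> carrier R" unfolding \<phi>_def by auto
    fix x y assume "x \<in> carrier R" "y \<in> carrier R"
    then obtain g h where "x = proj I g" "y = proj I h" using carrier_R by auto
    thus "\<phi> (x \<oplus>\<^bsub>R\<^esub> y) = \<phi> x \<oplus>\<^bsub>R\<^esub> \<phi> y"
      by (simp add: proj_add[symmetric] \<phi>_proj add)
  next
    fix r s assume "r \<in> carrier R" "s \<in> carrier R"
    then obtain g h where "r = proj I g" "s = proj I h" using carrier_R by auto
    thus "\<phi> (r [^]\<^bsub>R\<^esub> (p ^ e) \<otimes>\<^bsub>R\<^esub> s) = r \<otimes>\<^bsub>R\<^esub> \<phi> s"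
      by (simp add: proj_power[symmetric] proj_mult[symmetric] \<phi>_proj frob_linear)
  qed
  thus ?thesis using that \<phi>_proj by blast
qed

lemma proj_mem_if_terms_mem:
  assumes "ideal J R" "\<And>a. a \<in> Poly_Mapping.keys F \<Longrightarrow>
     proj I (Poly_Mapping.single a (Poly_Mapping.lookup F a)) \<in> J"
  shows "proj I F \<in> J"
proof -
  interpret J: ideal J R by fact
  have "proj I (\<Sum>a\<in>K. Poly_Mapping.single a (Poly_Mapping.lookup F a)) \<in> J"
    if "finite K" "K \<subseteq> Poly_Mapping.keys F" for K
    using that by (induct rule: finite_induct) (auto simp: proj_zero proj_add assms(2))
  thus ?thesis by (metis poly_mapping_sum_keys finite_keys order_refl)
qed

end

locale poly_quotient_prime = poly_quotient I for I :: "('v::finite, 'k::comm_ring_1) mpoly set" +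
  fixes q :: "('v, 'k) mpoly set set"
  assumes primeideal_q: "primeideal q R"
begin

interpretation q: primeideal q R by (rule primeideal_q)

text \<open>The union of the cosets in \<open>q\<close> is the preimage of \<open>q\<close> in \<open>S\<close>.\<close>
definition Q :: "('v, 'k) mpoly set" where "Q = \<Union> q"

lemma mem_Q_iff: "g \<in> Q \<longleftrightarrow> proj I g \<in> q"
proof -
  have "q \<subseteq> carrier (poly_ring Quot I)" using q.a_subset by (simp add: quot_ring_def)
  from poly.canonical_proj_vimage_mem_iff[OF ideal_I this] show ?thesis
    unfolding Q_def proj_def by simp
qed

lemma ideal_Q: "ideal Q poly_ring"
  unfolding Q_def using poly.quot_ideal_imp_ring_ideal[OF ideal_I] q.is_ideal
  by (simp add: quot_ring_def)

sublocale Q: ideal Q poly_ring by (rule ideal_Q)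

lemma I_subset_Q: "I \<subseteq> Q"
proof
  fix g assume "g \<in> I"
  hence "proj I g = \<zero>\<^bsub>R\<^esub>" by (simp add: proj_eq_zero_iff)
  thus "g \<in> Q" using mem_Q_iff q.zero_closed by simp
qed

lemma one_notin_Q: "1 \<notin> Q"
proof
  assume "1 \<in> Q"
  hence "\<one>\<^bsub>R\<^esub> \<in> q" using mem_Q_iff ring_hom_one[OF proj_ring_hom] by simp
  thus False using q.one_imp_carrier q.I_notcarr by blast
qed

lemma mult_mem_Q_iff: "g * h \<in> Q \<longleftrightarrow> g \<in> Q \<or> h \<in> Q"
proof
  assume "g * h \<in> Q"
  thus "g \<in> Q \<or> h \<in> Q" using q.I_prime[of "proj I g" "proj I h"] by (simp add: mem_Q_iff proj_mult)
next
  assume "g \<in> Q \<or> h \<in> Q"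
  thus "g * h \<in> Q" using Q.I_l_closed[of h g] Q.I_r_closed[of g h] by auto
qed

lemma power_mem_Q_iff: "x ^ n \<in> Q \<longleftrightarrow> n > 0 \<and> x \<in> Q"
  by (induct n) (auto simp: one_notin_Q mult_mem_Q_iff)

lemma prod_mem_Q_iff: "finite K \<Longrightarrow> (\<Prod>k\<in>K. f k) \<in> Q \<longleftrightarrow> (\<exists>k\<in>K. f k \<in> Q)"
  by (induct rule: finite_induct) (simp_all add: one_notin_Q mult_mem_Q_iff)

definition prime_vars :: "'v set" where "prime_vars = {v. var v \<in> Q}"

lemma monom_of_mem_Q_iff: "monom_of a \<in> Q \<longleftrightarrow> Poly_Mapping.keys a \<inter> prime_vars \<noteq> {}"
proof
  assume "monom_of a \<in> Q"
  hence "(\<Prod>v\<in>UNIV. var v ^ Poly_Mapping.lookup a v) \<in> Q"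
    by (simp only: monom_of_eq_prod_var_power[of a])
  hence "\<exists>v. var v ^ Poly_Mapping.lookup a v \<in> Q"
    using prod_mem_Q_iff[of UNIV "\<lambda>v. var v ^ Poly_Mapping.lookup a v"] by simp
  then obtain v where "var v ^ Poly_Mapping.lookup a v \<in> Q" ..
  thus "Poly_Mapping.keys a \<inter> prime_vars \<noteq> {}"
    by (auto simp: power_mem_Q_iff prime_vars_def in_keys_iff)
next
  assume "Poly_Mapping.keys a \<inter> prime_vars \<noteq> {}"
  then obtain v where v: "v \<in> Poly_Mapping.keys a" "var v \<in> Q" by (auto simp: prime_vars_def)
  hence "le_pm (Poly_Mapping.single v 1) a" by (simp add: le_pm_single_iff in_keys_iff)
  then obtain r where "a = Poly_Mapping.single v 1 + r" by (rule le_pmE)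
  hence "monom_of a = var v * (monom_of r :: ('v, 'k) mpoly)" by (simp add: monom_of_add)
  thus "monom_of a \<in> Q" using v(2) by (simp add: mult_mem_Q_iff)
qed

end

locale squarefree_setting =
  poly_quotient_prime I q + F_finite p "TYPE('k)"
  for I :: "('v::finite, 'k::field) mpoly set" and q p +
  assumes squarefree_I: "squarefree_monomial_ideal I"
    and monomial_q: "monomial_ideal_quot I q"
begin

interpretation q: primeideal q R by (rule primeideal_q)

definition generators :: "('v \<Rightarrow>\<^sub>0 nat) set" where
  "generators = (SOME G. (\<forall>m\<in>G. \<forall>v. Poly_Mapping.lookup m v \<le> 1) \<and>
     I = genideal poly_ring (monom_of ` G))"

lemma generators_squarefree: "m \<in> generators \<Longrightarrow> Poly_Mapping.lookup m v \<le> 1"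
  and mem_I_iff: "g \<in> I \<longleftrightarrow> (\<forall>b\<in>Poly_Mapping.keys g. \<exists>m\<in>generators. le_pm m b)"
proof -
  have "\<exists>G. (\<forall>m\<in>G. \<forall>v. Poly_Mapping.lookup m v \<le> 1) \<and> I = genideal poly_ring (monom_of ` G)"
    using squarefree_I unfolding squarefree_monomial_ideal_def by blast
  hence some: "(\<forall>m\<in>generators. \<forall>v. Poly_Mapping.lookup m v \<le> 1) \<and>
      I = genideal poly_ring (monom_of ` generators)"
    unfolding generators_def by (rule someI_ex)
  thus "m \<in> generators \<Longrightarrow> Poly_Mapping.lookup m v \<le> 1" by blast
  from some have "g \<in> I \<longleftrightarrow> g \<in> monomial_ideal generators"
    unfolding genideal_monom_of_eq_monomial_ideal by (metis (no_types))
  thus "g \<in> I \<longleftrightarrow> (\<forall>b\<in>Poly_Mapping.keys g. \<exists>m\<in>generators. le_pm m b)"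
    by (simp add: monomial_ideal_def)
qed

lemma le_pm_generator_iff:
  assumes "m \<in> generators"
  shows "le_pm m a \<longleftrightarrow> Poly_Mapping.keys m \<subseteq> Poly_Mapping.keys a"
proof -
  have "Poly_Mapping.lookup m v \<le> Poly_Mapping.lookup a v \<longleftrightarrow>
      (0 < Poly_Mapping.lookup m v \<longrightarrow> 0 < Poly_Mapping.lookup a v)" for v
    using generators_squarefree[OF assms, of v] by auto
  thus ?thesis unfolding le_pm_def by (auto simp: in_keys_iff subset_iff)
qed

definition face :: "'v set \<Rightarrow> bool" where
  "face T \<longleftrightarrow> \<not> (\<exists>m\<in>generators. Poly_Mapping.keys m \<subseteq> T)"

lemma face_subset: "face T \<Longrightarrow> S \<subseteq> T \<Longrightarrow> face S"
  unfolding face_def by blast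

lemma mem_I_iff_nonfaces: "g \<in> I \<longleftrightarrow> (\<forall>b\<in>Poly_Mapping.keys g. \<not> face (Poly_Mapping.keys b))"
  by (auto simp: mem_I_iff face_def le_pm_generator_iff)

lemma monom_of_mem_I_iff: "monom_of a \<in> I \<longleftrightarrow> \<not> face (Poly_Mapping.keys a)"
  by (simp add: mem_I_iff_nonfaces monom_of_def)

text \<open>\<open>Q\<close> is monomial: \<open>q\<close> is the image of the monomial ideal generated by the lifts of the
  generators of \<open>q\<close> and by those of \<open>I\<close>.\<close>
lemma monomials_mem_Q:
  assumes "g \<in> Q" "b \<in> Poly_Mapping.keys g"
  shows "monom_of b \<in> Q"
proof -
  obtain G where G: "q = genideal R ((\<lambda>m. proj I (monom_of m)) ` G)"
    using monomial_q unfolding monomial_ideal_quot_def by blast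
  define W where "W = (monomial_ideal (G \<union> generators) :: ('v, 'k) mpoly set)"
  have ideal_W: "ideal W poly_ring" unfolding W_def by (rule ideal_monomial_ideal)
  interpret W: ideal W poly_ring by (rule ideal_W)
  have I_W: "I \<subseteq> W" unfolding W_def monomial_ideal_def by (fastforce simp: mem_I_iff)
  have "ideal (proj I ` W) R"
    using poly.ring_ideal_imp_quot_ideal[OF ideal_I ideal_W]
    by (simp add: quot_ring_def proj_def[abs_def])
  moreover have "(\<lambda>m. proj I (monom_of m)) ` G \<subseteq> proj I ` W"
    unfolding W_def by (auto simp: monomial_ideal_def monom_of_def le_pm_def intro!: imageI)
  ultimately have "q \<subseteq> proj I ` W" unfolding G by (rule R.genideal_minimal)
  then obtain w where w: "w \<in> W" "proj I g = proj I w" using assms(1) mem_Q_iff by auto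
  hence "g \<in> W" using proj_eq_iff I_W W.a_closed[of "g - w" w] by auto
  then obtain m where m: "m \<in> G \<union> generators" "le_pm m b"
    using assms(2) unfolding W_def monomial_ideal_def by blast
  have "monom_of m \<in> Q"
  proof (cases "m \<in> G")
    case True
    hence "proj I (monom_of m) \<in> q"
      unfolding G by (intro subsetD[OF R.genideal_self]) auto
    thus ?thesis using mem_Q_iff by simp
  next
    case False
    hence "monom_of m \<in> I" using m(1) by (auto simp: mem_I_iff monom_of_def le_pm_def)
    thus ?thesis using I_subset_Q by blast
  qed
  moreover obtain r where "b = m + r" using m(2) by (rule le_pmE)
  ultimately show ?thesis by (simp add: monom_of_add mult_mem_Q_iff)
qed

lemma mem_Q_iff_monomials:
  "g \<in> Q \<longleftrightarrow> (\<forall>b\<in>Poly_Mapping.keys g. Poly_Mapping.keys b \<inter> prime_vars \<noteq> {})"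
proof
  assume "\<forall>b\<in>Poly_Mapping.keys g. Poly_Mapping.keys b \<inter> prime_vars \<noteq> {}"
  hence "Poly_Mapping.single b (Poly_Mapping.lookup g b) \<in> Q" if "b \<in> Poly_Mapping.keys g" for b
  proof -
    have "monom_of b \<in> Q" using that \<open>\<forall>b\<in>_. _\<close> monom_of_mem_Q_iff by blast
    hence "Poly_Mapping.single 0 (Poly_Mapping.lookup g b) * monom_of b \<in> Q"
      using Q.I_l_closed by simp
    thus ?thesis using single_eq_mult_monom_of[of 0 b "Poly_Mapping.lookup g b"] by simp
  qed
  thus "g \<in> Q" by (rule mem_ideal_if_terms_mem[OF ideal_Q])
qed (auto simp: monom_of_mem_Q_iff dest: monomials_mem_Q)

lemma face_if_disjoint_prime_vars:
  assumes "T \<inter> prime_vars = {}" shows "face T"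
  unfolding face_def
proof
  assume "\<exists>m\<in>generators. Poly_Mapping.keys m \<subseteq> T"
  then obtain m where m: "m \<in> generators" "Poly_Mapping.keys m \<subseteq> T" by blast
  hence "\<not> face (Poly_Mapping.keys m)" unfolding face_def by blast
  hence "monom_of m \<in> Q" using monom_of_mem_I_iff I_subset_Q by blast
  thus False using m(2) assms monom_of_mem_Q_iff by blast
qed

definition facet :: "'v set \<Rightarrow> bool" where
  "facet T \<longleftrightarrow> face T \<and> (\<forall>w. w \<notin> T \<longrightarrow> \<not> face (insert w T))"

lemma ex_facet_superset:
  assumes "face T" obtains S where "facet S" "T \<subseteq> S"
proof -
  let ?P = "\<lambda>S. face S \<and> T \<subseteq> S"
  obtain S where S: "?P S" "\<And>S'. ?P S' \<Longrightarrow> card S' \<le> card S"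
    using ex_has_greatest_nat[of ?P T card "Suc (card (UNIV :: 'v set))"] assms
    by (auto simp: le_imp_less_Suc card_mono)
  have "facet S" unfolding facet_def
  proof (intro conjI allI impI notI)
    show "face S" using S by blast
    fix w assume "w \<notin> S" "face (insert w S)"
    thus False using S(1) S(2)[of "insert w S"] by auto
  qed
  thus ?thesis using that S by blast
qed

definition facet_core :: "'v set" where
  "facet_core = \<Inter> {T. facet T \<and> - prime_vars \<subseteq> T}"

lemma nonface_shrink:
  assumes "\<not> face N" shows "\<not> face ((N - (prime_vars \<inter> facet_core)) \<union> - prime_vars)"
proof
  assume "face ((N - (prime_vars \<inter> facet_core)) \<union> - prime_vars)"
  then obtain S where S: "facet S" "(N - (prime_vars \<inter> facet_core)) \<union> - prime_vars \<subseteq> S"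
    using ex_facet_superset by blast
  hence "facet_core \<subseteq> S" unfolding facet_core_def by blast
  hence "N \<subseteq> S" using S(2) by blast
  thus False using S(1) assms face_subset unfolding facet_def by blast
qed

lemma mem_Q_if_face_monom_mult_mem_I:
  assumes "face (Poly_Mapping.keys t)" "- prime_vars \<subseteq> Poly_Mapping.keys t"
    and "monom_of t * h \<in> I"
  shows "h \<in> Q"
  unfolding mem_Q_iff_monomials
proof
  fix b assume "b \<in> Poly_Mapping.keys h"
  hence "t + b \<in> Poly_Mapping.keys (monom_of t * h)"
    by (simp add: monom_of_def lookup_single_mult_add in_keys_iff)
  hence "\<not> face (Poly_Mapping.keys (t + b))"
    using assms(3) unfolding mem_I_iff_nonfaces by blast
  hence "\<not> face (Poly_Mapping.keys t \<union> Poly_Mapping.keys b)" by (simp add: keys_add_nat)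
  hence "\<not> Poly_Mapping.keys b \<subseteq> Poly_Mapping.keys t" using assms(1) by (auto simp: sup_absorb1)
  thus "Poly_Mapping.keys b \<inter> prime_vars \<noteq> {}" using assms(2) by blast
qed

lemma ideal_frob_power: "ideal (frob_power R p q e) R"
  unfolding frob_power_def by (rule R.genideal_ideal) (use q.Icarr in auto)

lemma term_mem_frob_power:
  assumes "v \<in> prime_vars" "p ^ e \<le> Poly_Mapping.lookup a v"
  shows "proj I (Poly_Mapping.single a c) \<in> frob_power R p q e"
proof -
  interpret frob: ideal "frob_power R p q e" R by (rule ideal_frob_power)
  have "le_pm (Poly_Mapping.single v (p ^ e)) a" using assms(2) by (simp add: le_pm_single_iff)
  then obtain r where r: "a = Poly_Mapping.single v (p ^ e) + r" by (rule le_pmE)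
  have "Poly_Mapping.single a c = Poly_Mapping.single r c * var v ^ (p ^ e)"
    unfolding var_power r by (simp add: single_eq_mult_monom_of add.commute)
  hence eq: "proj I (Poly_Mapping.single a c) = proj I (Poly_Mapping.single r c) \<otimes>\<^bsub>R\<^esub> proj I (var v) [^]\<^bsub>R\<^esub> (p ^ e)"
    by (simp add: proj_mult proj_power)
  have "proj I (var v) \<in> q" using assms(1) mem_Q_iff unfolding prime_vars_def by simp
  hence "proj I (var v) [^]\<^bsub>R\<^esub> (p ^ e) \<in> frob_power R p q e"
    unfolding frob_power_def using R.genideal_self[of "(\<lambda>x. x [^]\<^bsub>R\<^esub> (p ^ e)) ` q"] q.Icarr by blast
  thus ?thesis unfolding eq by (rule frob.I_l_closed) simp
qed

lemma term_mem_cartier_core: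
  assumes "\<not> Poly_Mapping.keys a \<subseteq> facet_core"
  shows "proj I (Poly_Mapping.single a c) \<in> cartier_core R p q"
  unfolding cartier_core_def J_e_def
proof (intro InterI, clarsimp)
  fix s \<phi> assume \<phi>: "\<phi> \<in> cartier_maps R p s"
  obtain S w where S: "facet S" "- prime_vars \<subseteq> S" and w: "w \<in> Poly_Mapping.keys a" "w \<notin> S"
    using assms unfolding facet_core_def by blast
  define t where "t = mk (\<lambda>v. if v \<in> S then 1 else 0)"
  have keys_t: "Poly_Mapping.keys t = S" by (auto simp: t_def in_keys_iff split: if_splits)
  let ?y = "proj I (Poly_Mapping.single a c)" and ?x_t = "proj I (monom_of t)"
  have "Poly_Mapping.keys (smul_pm (p ^ s) t + a) = S \<union> Poly_Mapping.keys a"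
    using p_pos unfolding keys_add_nat by (auto simp: smul_pm_def t_def in_keys_iff split: if_splits)
  hence "\<not> face (Poly_Mapping.keys (smul_pm (p ^ s) t + a))"
    using S(1) w face_subset[of _ "insert w S"] unfolding facet_def by blast
  hence "monom_of t ^ (p ^ s) * Poly_Mapping.single a c \<in> I"
    by (simp add: monom_of_def single_power mult_single mem_I_iff_nonfaces)
  hence "?x_t [^]\<^bsub>R\<^esub> (p ^ s) \<otimes>\<^bsub>R\<^esub> ?y = \<zero>\<^bsub>R\<^esub>"
    by (simp add: proj_eq_zero_iff flip: proj_power proj_mult)
  moreover have "\<phi> (?x_t [^]\<^bsub>R\<^esub> (p ^ s) \<otimes>\<^bsub>R\<^esub> ?y) = ?x_t \<otimes>\<^bsub>R\<^esub> \<phi> ?y"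
    by (rule R.cartier_map_frob_linear[OF \<phi>]) simp_all
  ultimately have "?x_t \<otimes>\<^bsub>R\<^esub> \<phi> ?y = \<zero>\<^bsub>R\<^esub>" using R.cartier_map_zero[OF \<phi>] by simp
  moreover obtain h where h: "\<phi> ?y = proj I h"
    using R.cartier_map_closed[OF \<phi>, of ?y] carrier_R by auto
  ultimately have "monom_of t * h \<in> I" by (simp add: proj_eq_zero_iff flip: proj_mult)
  hence "h \<in> Q"
    using S face_subset keys_t by (intro mem_Q_if_face_monom_mult_mem_I) (auto simp: facet_def)
  thus "\<phi> ?y \<in> q" unfolding h mem_Q_iff .
qed

lemma twisted_trace_preserves_I:
  assumes "twisted_trace p e \<psi>"
    and u_outside: "\<And>v. v \<notin> prime_vars \<Longrightarrow> p ^ e \<le> Poly_Mapping.lookup u v"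
    and u_off_core: "\<And>v. v \<in> prime_vars - facet_core \<Longrightarrow> p ^ e - 1 \<le> Poly_Mapping.lookup u v"
    and "g \<in> I"
  shows "twisted_trace.Phi p e u \<psi> g \<in> I"
proof -
  interpret T: twisted_trace p e u \<psi> by fact
  show ?thesis unfolding mem_I_iff_nonfaces
  proof
    fix d assume "d \<in> Poly_Mapping.keys (T.Phi g)"
    hence d: "T.admissible d" "T.source d \<in> Poly_Mapping.keys g"
      using T.\<psi>_zero by (auto simp: T.lookup_Phi in_keys_iff split: if_splits)
    hence "\<not> face (Poly_Mapping.keys (T.source d))" using \<open>g \<in> I\<close> mem_I_iff_nonfaces by blast
    moreover have "(Poly_Mapping.keys (T.source d) - (prime_vars \<inter> facet_core)) \<union> - prime_vars
        \<subseteq> Poly_Mapping.keys d"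
    proof
      fix v assume v: "v \<in> (Poly_Mapping.keys (T.source d) - (prime_vars \<inter> facet_core)) \<union> - prime_vars"
      show "v \<in> Poly_Mapping.keys d"
      proof (cases "v \<in> prime_vars")
        case True
        hence "p ^ e - 1 \<le> Poly_Mapping.lookup u v" "0 < Poly_Mapping.lookup (T.source d) v"
          using v u_off_core by (auto simp: in_keys_iff)
        thus ?thesis using T.lookup_pos_if_source_pos by (simp add: in_keys_iff)
      next
        case False
        thus ?thesis using T.lookup_pos_if_admissible[OF d(1) u_outside] by (simp add: in_keys_iff)
      qed
    qed
    ultimately show "\<not> face (Poly_Mapping.keys d)" using nonface_shrink face_subset by blast
  qed
qed

text \<open>The twisted trace is chosen so that \<open>x\<^sup>d\<close>, with \<open>d\<close> supported outside \<open>prime_vars\<close>,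
  receives the coefficient of \<open>x\<^sup>a\<close>, and so that it preserves \<open>I\<close>.\<close>
lemma ex_cartier_map_not_in_q:
  assumes a: "a \<in> Poly_Mapping.keys F" "\<And>v. v \<in> prime_vars \<Longrightarrow> Poly_Mapping.lookup a v < p ^ e"
    "Poly_Mapping.keys a \<subseteq> facet_core"
  shows "\<exists>\<phi>\<in>cartier_maps R p e. \<phi> (proj I F) \<notin> q"
proof -
  obtain \<psi> where \<psi>: "\<And>x y. \<psi> (x + y) = \<psi> x + \<psi> y" "\<And>l x. \<psi> (l ^ (p ^ e) * x) = l * \<psi> x"
    "\<psi> (Poly_Mapping.lookup F a) \<noteq> 0"
    using ex_frob_inverse_linear_nonzero_at[of "Poly_Mapping.lookup F a" e] a(1)
    by (auto simp: in_keys_iff)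
  define d where "d = mk (\<lambda>v. if v \<in> prime_vars then 0 else Poly_Mapping.lookup a v + 1)"
  define u where "u = mk (\<lambda>v. p ^ e * Poly_Mapping.lookup d v + (p ^ e - 1) - Poly_Mapping.lookup a v)"
  interpret T: twisted_trace p e u \<psi>
    using prime_p CHAR_eq \<psi> by unfold_locales auto
  have one_le: "1 \<le> p ^ e" using T.p_power_pos by linarith
  have "Poly_Mapping.lookup a v \<le> p ^ e * Poly_Mapping.lookup d v + (p ^ e - 1)" for v
  proof (cases "v \<in> prime_vars")
    case False
    have "Poly_Mapping.lookup a v + 1 \<le> p ^ e * (Poly_Mapping.lookup a v + 1)"
      using mult_le_mono1[OF one_le, of "Poly_Mapping.lookup a v + 1"] by simp
    thus ?thesis using False by (simp add: d_def)
  next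
    case True
    thus ?thesis using a(2)[OF True] by (simp add: d_def)
  qed
  note d_source = T.admissible_source_eq[OF u_def this]
  have "T.Phi g \<in> I" if "g \<in> I" for g
  proof (rule twisted_trace_preserves_I[OF T.twisted_trace_axioms _ _ that])
    fix v assume "v \<notin> prime_vars"
    hence "Poly_Mapping.lookup u v
        = p ^ e * Poly_Mapping.lookup a v + p ^ e + (p ^ e - 1) - Poly_Mapping.lookup a v"
      by (simp add: u_def d_def algebra_simps)
    moreover have "Poly_Mapping.lookup a v \<le> p ^ e * Poly_Mapping.lookup a v"
      using mult_le_mono1[OF one_le] by simp
    ultimately show "p ^ e \<le> Poly_Mapping.lookup u v" by linarith
  next
    fix v assume "v \<in> prime_vars - facet_core"
    hence "Poly_Mapping.lookup a v = 0" "Poly_Mapping.lookup d v = 0"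
      using a(3) by (auto simp: d_def in_keys_iff)
    thus "p ^ e - 1 \<le> Poly_Mapping.lookup u v" by (simp add: u_def)
  qed
  then obtain \<phi> where \<phi>: "\<phi> \<in> cartier_maps R p e" "\<And>g. \<phi> (proj I g) = proj I (T.Phi g)"
    using cartier_map_of_ideal_preserving[of T.Phi p e] T.Phi_add T.Phi_frob_linear by blast
  have "Poly_Mapping.lookup (T.Phi F) d = \<psi> (Poly_Mapping.lookup F a)"
    using d_source by (simp add: T.lookup_Phi)
  hence "d \<in> Poly_Mapping.keys (T.Phi F)" using \<psi>(3) by (simp add: in_keys_iff)
  moreover have "Poly_Mapping.keys d \<inter> prime_vars = {}" by (auto simp: d_def in_keys_iff)
  ultimately have "T.Phi F \<notin> Q" using mem_Q_iff_monomials by blast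
  hence "\<phi> (proj I F) \<notin> q" using \<phi>(2) mem_Q_iff by simp
  thus ?thesis using \<phi>(1) by blast
qed

lemma J_e_subset_frob_power_plus_cartier_core:
  "J_e R p q e \<subseteq> frob_power R p q e <+>\<^bsub>R\<^esub> cartier_core R p q"
proof
  let ?sum = "frob_power R p q e <+>\<^bsub>R\<^esub> cartier_core R p q"
  have ideal_core: "ideal (cartier_core R p q) R" by (rule R.ideal_cartier_core[OF q.is_ideal])
  have ideal_sum: "ideal ?sum R" by (rule R.add_ideals[OF ideal_frob_power ideal_core])
  have "frob_power R p q e \<union> cartier_core R p q \<subseteq> carrier R"
    using ideal.Icarr[OF ideal_frob_power] ideal.Icarr[OF ideal_core] by blast
  from R.genideal_self[OF this] have "frob_power R p q e \<union> cartier_core R p q \<subseteq> ?sum"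
    unfolding R.union_genideal[OF ideal_frob_power ideal_core] .
  hence frob_sub: "frob_power R p q e \<subseteq> ?sum" and core_sub: "cartier_core R p q \<subseteq> ?sum" by auto
  fix f assume f: "f \<in> J_e R p q e"
  then obtain F where F: "f = proj I F" using carrier_R by (auto simp: J_e_def)
  show "f \<in> ?sum" unfolding F
  proof (rule proj_mem_if_terms_mem[OF ideal_sum])
    fix a assume a: "a \<in> Poly_Mapping.keys F"
    show "proj I (Poly_Mapping.single a (Poly_Mapping.lookup F a)) \<in> ?sum"
    proof (cases "\<exists>v\<in>prime_vars. p ^ e \<le> Poly_Mapping.lookup a v")
      case True
      thus ?thesis using term_mem_frob_power frob_sub by blast
    next
      case low: False
      show ?thesis
      proof (cases "Poly_Mapping.keys a \<subseteq> facet_core")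
        case True
        have "Poly_Mapping.lookup a v < p ^ e" if "v \<in> prime_vars" for v
          using low that by (simp add: not_le)
        then obtain \<phi> where "\<phi> \<in> cartier_maps R p e" "\<phi> f \<notin> q"
          using ex_cartier_map_not_in_q[OF a _ True] F by blast
        thus ?thesis using f unfolding J_e_def by blast
      next
        case False
        thus ?thesis using term_mem_cartier_core core_sub by blast
      qed
    qed
  qed
qed

lemma J_e_eq_frob_power_plus_cartier_core:
  "J_e R p q e = frob_power R p q e <+>\<^bsub>R\<^esub> cartier_core R p q"
  by (rule equalityI[OF J_e_subset_frob_power_plus_cartier_core
        R.frob_power_plus_cartier_core_subset_J_e[OF q.is_ideal]])

end

theorem mainTheorem11:
  fixes I :: "('v::finite, 'k::field) mpoly set"
    and q :: "('v, 'k) mpoly set set"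
    and p e :: nat
  assumes "prime p" and "CHAR('k) = p"
    and "F_finite_field TYPE('k) p"
    and "squarefree_monomial_ideal I"
    and "primeideal q (quot_ring I)"
    and "monomial_ideal_quot I q"
  shows "J_e (quot_ring I) p q e =
           frob_power (quot_ring I) p q e <+>\<^bsub>quot_ring I\<^esub> cartier_core (quot_ring I) p q"
proof -
  interpret squarefree_setting I q p
  proof (intro squarefree_setting.intro poly_quotient_prime.intro F_finite.intro
      squarefree_setting_axioms.intro poly_quotient_prime_axioms.intro poly_quotient.intro)
    show "ideal I poly_ring" using assms(4) by (rule ideal_squarefree_monomial_ideal)
  qed (use assms in simp_all)
  show ?thesis by (rule J_e_eq_frob_power_plus_cartier_core)
qed

end
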